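(* Let $n\ge2$, let $R=\Bbbk\langle u,d\mid d^2u+ud^2,\ du^2+u^2d\rangle$, graded with $\deg u=\deg d=1$, let $\xi$ be a primitive $n$-th root of unity and let $G=\mathbb Z_n=\langle g\rangle$ act on $R$ by $g(u)=\xi u$, $g(d)=\xi^{-1}d$. In the skew group algebra $R\#\Bbbk G$ let $f_i=\frac1n\sum_{j=0}^{n-1}\xi^{ij}\#g^j$ for $i=0,\dots,n-1$, $f=f_0+\dots+f_{n-1}$, and $B=f(R\#\Bbbk G)f$, graded by the grading of $R$ with $\Bbbk G$ in degree $0$. Let $M$ be the adjacency matrix of the quiver $Q$ with vertices $\{0,\dots,n-1\}$ and arrows $u_i:i\to i+1$, $d_i:i+1\to i$ (indices mod $n$). Then the matrix-valued Hilbert series of $B$ with respect to $f_0,\dots,f_{n-1}$ is $h_B(t)=(I-Mt+It^2)^{-1}(1-t^2)^{-1}$ and the total Hilbert series is $h_B^{\mathrm{tot}}(t)=n(1-t)^{-2}(1-t^2)^{-1}$.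
   Context: $\Bbbk$ is an algebraically closed field of characteristic zero. The skew group algebra $R\#\Bbbk G$ is $R\otimes\Bbbk G$ with $(r\#g)(s\#h)=rg(s)\#gh$. The adjacency matrix $M$ has $(i,j)$ entry equal to the number of arrows from $i$ to $j$. For a graded algebra $B$ with complete set of degree-zero orthogonal idempotents $f_0,\dots,f_{n-1}$, the matrix-valued Hilbert series is $h_B(t)=\sum_kH_kt^k$ with $(H_k)_{ij}=\dim_\Bbbk f_iB_kf_j$, and the total Hilbert series $h_B^{\mathrm{tot}}(t)$ has as coefficient of $t^k$ the sum of entries of $H_k$. *)

theory Defs
  imports "Jordan_Normal_Form.Matrix"
          "HOL-Computational_Algebra.Formal_Power_Series"
          "HOL-Computational_Algebra.Polynomial"
          "HOL-Library.Function_Algebras"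
begin

text \<open>Words in the free algebra on u, d: True = u, False = d.
 Degree of a word = its length (deg u = deg d = 1).\<close>

type_synonym 'a free = "bool list \<Rightarrow> 'a"
type_synonym 'a skew = "bool list \<Rightarrow> nat \<Rightarrow> 'a"  (* F w m = coefficient of w # g^m *)

definition fscale :: "'a::field \<Rightarrow> 'a free \<Rightarrow> 'a free" where
  "fscale c p = (\<lambda>w. c * p w)"

definition sscale :: "'a::field \<Rightarrow> 'a skew \<Rightarrow> 'a skew" where
  "sscale c F = (\<lambda>w m. c * F w m)"

definition fmono :: "bool list \<Rightarrow> 'a::field free" where
  "fmono a = (\<lambda>w. if w = a then 1 else 0)"

definition fmul :: "'a::field free \<Rightarrow> 'a free \<Rightarrow> 'a free" where
  "fmul p q = (\<lambda>w. \<Sum>k\<le>length w. p (take k w) * q (drop k w))"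

definition rel1 :: "'a::field free" where
  "rel1 = fmono [False, False, True] + fmono [True, False, False]"
definition rel2 :: "'a::field free" where
  "rel2 = fmono [False, True, True] + fmono [True, True, False]"

text \<open>The two-sided ideal I generated by the relations (R = k<u,d>/I).\<close>
definition relIdeal :: "'a::field free set" where
  "relIdeal = module.span fscale
     {fmul (fmul (fmono a) r) (fmono b) | a b r. r = rel1 \<or> r = rel2}"

text \<open>Weight of a word: g(u) = xi u, g(d) = xi^-1 d, so g^m(w) = xi^(m * wt w) w.\<close>
definition wt :: "bool list \<Rightarrow> int" where
  "wt w = (\<Sum>b\<leftarrow>w. if b then 1 else -1)"

text \<open>Multiplication of the skew group algebra k<u,d> # kG (G = Z_n = <g>):
  (a # g^x)(b # g^y) = g^x(b)... i.e. a g^x(b) # g^(x+y).\<close>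
definition skmul :: "nat \<Rightarrow> 'a::field \<Rightarrow> 'a skew \<Rightarrow> 'a skew \<Rightarrow> 'a skew" where
  "skmul n \<xi> F H = (\<lambda>w c. if c < n then
      (\<Sum>k\<le>length w. \<Sum>x<n. F (take k w) x * \<xi> powi (int x * wt (drop k w))
                              * H (drop k w) ((c + n - x) mod n))
    else 0)"

definition skdeg :: "nat \<Rightarrow> nat \<Rightarrow> 'a::field skew set" where
  "skdeg n k = {F. (\<forall>w m. (m \<ge> n \<or> length w \<noteq> k) \<longrightarrow> F w m = 0)}"

text \<open>Degree-k part of the ideal I # kG (kernel of k<u,d> # kG \<rightarrow> R # kG).\<close>
definition idealdeg :: "nat \<Rightarrow> nat \<Rightarrow> 'a::field skew set" where
  "idealdeg n k = {F \<in> skdeg n k. \<forall>m<n. (\<lambda>w. F w m) \<in> relIdeal}"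

definition fidem :: "nat \<Rightarrow> 'a::field \<Rightarrow> nat \<Rightarrow> 'a skew" where
  "fidem n \<xi> i = (\<lambda>w m. if w = [] \<and> m < n then inverse (of_nat n) * \<xi> ^ (i * m) else 0)"

definition ftot :: "nat \<Rightarrow> 'a::field \<Rightarrow> 'a skew" where
  "ftot n \<xi> = (\<Sum>i<n. fidem n \<xi> i)"

text \<open>Representatives of f_i B_k f_j, where B = f (R # kG) f.\<close>
definition cornerRep :: "nat \<Rightarrow> 'a::field \<Rightarrow> nat \<Rightarrow> nat \<Rightarrow> nat \<Rightarrow> 'a skew set" where
  "cornerRep n \<xi> k i j =
     {skmul n \<xi> (skmul n \<xi> (fidem n \<xi> i)
        (skmul n \<xi> (skmul n \<xi> (ftot n \<xi>) X) (ftot n \<xi>))) (fidem n \<xi> j) | X. X \<in> skdeg n k}"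

text \<open>dim_k f_i B_k f_j: the dimension of the image of cornerRep in the quotient
  (degree-k part of k<u,d> # kG) / (degree-k part of I # kG),
  computed as dim (V + J) - dim J.\<close>
definition hdim :: "nat \<Rightarrow> 'a::field \<Rightarrow> nat \<Rightarrow> nat \<Rightarrow> nat \<Rightarrow> nat" where
  "hdim n \<xi> k i j =
     vector_space.dim sscale (cornerRep n \<xi> k i j \<union> idealdeg n k)
     - vector_space.dim sscale (idealdeg n (k::nat) :: 'a skew set)"

definition hilbB :: "nat \<Rightarrow> 'a::field \<Rightarrow> int fps mat" where
  "hilbB n \<xi> = mat n n (\<lambda>(i, j). Abs_fps (\<lambda>k. int (hdim n \<xi> k i j)))"

definition hilbB_tot :: "nat \<Rightarrow> 'a::field \<Rightarrow> int fps" where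
  "hilbB_tot n \<xi> = Abs_fps (\<lambda>k. \<Sum>i<n. \<Sum>j<n. int (hdim n \<xi> k i j))"

text \<open>The quiver Q: vertices 0..n-1, arrows u_i : i \<rightarrow> i+1 (Inl i), d_i : i+1 \<rightarrow> i (Inr i).\<close>
definition qarrows :: "nat \<Rightarrow> (nat + nat) set" where
  "qarrows n = Inl ` {..<n} \<union> Inr ` {..<n}"

definition qsrc :: "nat \<Rightarrow> nat + nat \<Rightarrow> nat" where
  "qsrc n a = (case a of Inl i \<Rightarrow> i | Inr i \<Rightarrow> (i + 1) mod n)"

definition qtgt :: "nat \<Rightarrow> nat + nat \<Rightarrow> nat" where
  "qtgt n a = (case a of Inl i \<Rightarrow> (i + 1) mod n | Inr i \<Rightarrow> i)"

definition adjM :: "nat \<Rightarrow> nat mat" where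
  "adjM n = mat n n (\<lambda>(i, j). card {a \<in> qarrows n. qsrc n a = i \<and> qtgt n a = j})"

end

theory Submission
  imports Defs
begin

(* Rewriting d\<^sup>2u \<rightarrow> -ud\<^sup>2 and du\<^sup>2 \<rightarrow> -u\<^sup>2d turns every word into \<plusminus> a normal word
   u^a (du)^b d^c, and the normal words stay independent modulo the relations: both
   relations preserve the length, the number of u's and the number of u's in even
   positions, and change the number of inversions (d before u) by exactly 2, so the
   signed sums of the dual basis over a class of words with equal invariants vanish on
   the ideal.  In R # kG the idempotents f_i project onto weight spaces, so
   (H_k)_ij counts the triples (a, b, c) with a + 2b + c = k and a - c = j - i mod n.
   Their generating functions N_r satisfy
   (1 - t\<^sup>2) ((1 + t\<^sup>2) N_r - t (N_(r-1) + N_(r+1))) = [r = 0 mod n],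
   which is the matrix identity entry by entry; summing it over r gives the total series. *)

section \<open>Normal words\<close>

definition normal_word :: "nat \<Rightarrow> nat \<Rightarrow> nat \<Rightarrow> bool list" where
  "normal_word a b c = replicate a True @ concat (replicate b [False, True]) @ replicate c False"

fun inversions :: "bool list \<Rightarrow> nat" where
  "inversions [] = 0"
| "inversions (x # w) = (if x then inversions w else count_list w True + inversions w)"

fun count_u_parity :: "bool list \<Rightarrow> bool \<Rightarrow> nat" where
  "count_u_parity [] p = 0"
| "count_u_parity (x # w) p = (if x \<and> p then 1 else 0) + count_u_parity w (\<not> p)"

definition word_key :: "bool list \<Rightarrow> nat \<times> nat \<times> nat" where
  "word_key w = (length w, count_list w True, count_u_parity w True)"

definition word_sign :: "bool list \<Rightarrow> 'a::field" where
  "word_sign w = (-1) ^ (inversions w div 2)"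

lemma inversions_append:
  "inversions (x @ z) = inversions x + count_list x False * count_list z True + inversions z"
  by (induction x) (auto simp: algebra_simps)

lemma count_u_parity_append:
  "count_u_parity (x @ z) p = count_u_parity x p + count_u_parity z (if even (length x) then p else \<not> p)"
  by (induction x arbitrary: p) auto

lemma word_key_ddu: "word_key (x @ [False,False,True] @ y) = word_key (x @ [True,False,False] @ y)"
  by (simp add: word_key_def count_u_parity_append)

lemma word_key_duu: "word_key (x @ [False,True,True] @ y) = word_key (x @ [True,True,False] @ y)"
  by (simp add: word_key_def count_u_parity_append)

lemma inversions_ddu: "inversions (x @ [False,False,True] @ y) = inversions (x @ [True,False,False] @ y) + 2"
  by (simp add: inversions_append algebra_simps)

lemma inversions_duu: "inversions (x @ [False,True,True] @ y) = inversions (x @ [True,True,False] @ y) + 2"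
  by (simp add: inversions_append algebra_simps)

lemma word_sign_ddu:
  "word_sign (x @ False # False # True # y) = - (word_sign (x @ True # False # False # y) :: 'a::field)"
  using inversions_ddu[of x y] by (simp add: word_sign_def)

lemma word_sign_duu:
  "word_sign (x @ False # True # True # y) = - (word_sign (x @ True # True # False # y) :: 'a::field)"
  using inversions_duu[of x y] by (simp add: word_sign_def)

lemma word_sign_nonzero: "word_sign w \<noteq> (0 :: 'a::field)"
  by (simp add: word_sign_def)

lemma normal_word_or_reducible:
  "(\<exists>a b c. w = normal_word a b c) \<or>
   (\<exists>x y. w = x @ [False,False,True] @ y \<or> w = x @ [False,True,True] @ y)"
proof (induction w)
  case Nil
  then show ?case by (auto simp: normal_word_def intro!: exI[of _ 0])
next
  case (Cons h w)
  show ?case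
  proof (cases "\<exists>a b c. w = normal_word a b c")
    case False
    then obtain x y where "w = x @ [False,False,True] @ y \<or> w = x @ [False,True,True] @ y"
      using Cons by blast
    then show ?thesis by (metis append_Cons)
  next
    case True
    then obtain a b c where w: "w = normal_word a b c" by blast
    consider "h" | "\<not> h" "a = 0" "b = 0" | b' where "\<not> h" "a = 0" "b = Suc b'"
      | "\<not> h" "a = 1" | a' where "\<not> h" "a = Suc (Suc a')"
      by (metis One_nat_def not0_implies_Suc)
    then show ?thesis
    proof cases
      case 1
      then have "h # w = normal_word (Suc a) b c" by (simp add: w normal_word_def)
      then show ?thesis by blast
    next
      case 2
      then have "h # w = normal_word 0 0 (Suc c)" by (simp add: w normal_word_def)
      then show ?thesis by blast
    next
      case 3
      then have "h # w = [] @ [False,False,True] @ normal_word 0 b' c" by (simp add: w normal_word_def)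
      then show ?thesis by blast
    next
      case 4
      then have "h # w = normal_word 0 (Suc b) c" by (simp add: w normal_word_def)
      then show ?thesis by blast
    next
      case 5
      then have "h # w = [] @ [False,True,True] @ normal_word a' b c" by (simp add: w normal_word_def)
      then show ?thesis by blast
    qed
  qed
qed

lemma length_normal_word: "length (normal_word a b c) = a + 2 * b + c"
  by (simp add: normal_word_def length_concat sum_list_replicate)

lemma count_u_normal_word: "count_list (normal_word a b c) True = a + b"
proof -
  have "count_list (concat (replicate b [False, True])) True = b"
    by (induction b) auto
  moreover have "count_list (replicate c False) True = 0" by (induction c) auto
  moreover have "count_list (replicate a True) True = a" by (induction a) auto
  ultimately show ?thesis by (simp add: normal_word_def)
qed

lemma count_u_parity_normal_word:
  "count_u_parity (normal_word a b c) True = (a + 1) div 2 + (if even a then 0 else b)"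
proof -
  have "count_u_parity (replicate a True) p = (if p then (a + 1) div 2 else a div 2)" for p
    by (induction a arbitrary: p) auto
  moreover have "count_u_parity (replicate c False) p = 0" for p
    by (induction c arbitrary: p) auto
  moreover have "count_u_parity (concat (replicate b [False, True])) p = (if p then 0 else b)" for p
    by (induction b) auto
  ultimately show ?thesis
    by (simp add: normal_word_def count_u_parity_append length_concat sum_list_replicate)
qed

lemma word_key_normal_word_inj:
  assumes "word_key (normal_word a b c) = word_key (normal_word a' b' c')"
  shows "a = a' \<and> b = b' \<and> c = c'"
proof -
  have len: "a + 2 * b + c = a' + 2 * b' + c'" and u: "a + b = a' + b'"
    and even_u: "(a + 1) div 2 + (if even a then 0 else b) = (a' + 1) div 2 + (if even a' then 0 else b')"
    using assms by (auto simp: word_key_def length_normal_word count_u_normal_word count_u_parity_normal_word)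
  have "a = a'"
    using u even_u by (cases "even a"; cases "even a'") (auto elim!: evenE oddE)
  then show ?thesis using len u by auto
qed

lemma wt_eq_count: "wt w = 2 * int (count_list w True) - int (length w)"
  by (induction w) (auto simp: wt_def)

lemma wt_normal_word: "wt (normal_word a b c) = int a - int c"
  by (simp add: wt_eq_count count_u_normal_word length_normal_word)

lemma finite_length_eq: "finite {w :: bool list. length w = k}"
  using finite_lists_length_eq[of "UNIV :: bool set" k] by simp

section \<open>Normal words modulo the relations\<close>

interpretation free: vector_space "fscale :: 'a::field \<Rightarrow> 'a free \<Rightarrow> 'a free"
  by unfold_locales (auto simp: fscale_def algebra_simps fun_eq_iff)

lemma fmul_fmono: "fmul (fmono a) (fmono b) = (fmono (a @ b) :: 'a::field free)"
proof (rule ext)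
  fix w :: "bool list"
  have "(take k w = a \<and> drop k w = b) \<longleftrightarrow> (k = length a \<and> w = a @ b)" if "k \<le> length w" for k
    using that by (auto simp: append_eq_conv_conj min_def)
  then have "fmul (fmono a) (fmono b) w = (\<Sum>k\<le>length w. if k = length a \<and> w = a @ b then (1::'a) else 0)"
    unfolding fmul_def fmono_def by (intro sum.cong refl) auto
  also have "\<dots> = fmono (a @ b) w"
    by (auto simp: fmono_def sum.delta')
  finally show "fmul (fmono a) (fmono b) w = (fmono (a @ b) w :: 'a)" .
qed

lemma fmul_add_right: "fmul p (q + r) = fmul p q + (fmul p r :: 'a::field free)"
  by (auto simp: fmul_def fun_eq_iff distrib_left sum.distrib)

lemma fmul_add_left: "fmul (p + q) r = fmul p r + (fmul q r :: 'a::field free)"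
  by (auto simp: fmul_def fun_eq_iff distrib_right sum.distrib)

lemma fmul_rel1: "fmul (fmul (fmono x) rel1) (fmono y) =
   fmono (x @ [False,False,True] @ y) + (fmono (x @ [True,False,False] @ y) :: 'a::field free)"
  by (simp add: rel1_def fmul_add_right fmul_add_left fmul_fmono)

lemma fmul_rel2: "fmul (fmul (fmono x) rel2) (fmono y) =
   fmono (x @ [False,True,True] @ y) + (fmono (x @ [True,True,False] @ y) :: 'a::field free)"
  by (simp add: rel2_def fmul_add_right fmul_add_left fmul_fmono)

lemma relator_ddu_in_relIdeal:
  "fmono (x @ [False,False,True] @ y) + fmono (x @ [True,False,False] @ y) \<in> (relIdeal :: 'a::field free set)"
  unfolding relIdeal_def fmul_rel1[symmetric] by (rule free.span_base) blast

lemma relator_duu_in_relIdeal: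
  "fmono (x @ [False,True,True] @ y) + fmono (x @ [True,True,False] @ y) \<in> (relIdeal :: 'a::field free set)"
  unfolding relIdeal_def fmul_rel2[symmetric] by (rule free.span_base) blast

lemma fmono_congruent_normal_word:
  "\<exists>a b c s. length (normal_word a b c) = length w \<and> count_list (normal_word a b c) True = count_list w True
     \<and> (s = 1 \<or> s = -1) \<and> fmono w - fscale s (fmono (normal_word a b c)) \<in> (relIdeal :: 'a::field free set)"
proof (induction "inversions w" arbitrary: w rule: less_induct)
  case less
  show ?case
  proof (cases "\<exists>a b c. w = normal_word a b c")
    case True
    then obtain a b c where w: "w = normal_word a b c" by blast
    have "fmono w - fscale 1 (fmono (normal_word a b c)) \<in> (relIdeal :: 'a free set)"
      unfolding relIdeal_def by (simp add: w fscale_def free.span_zero)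
    then show ?thesis using w by blast
  next
    case False
    then obtain x y where xy: "w = x @ [False,False,True] @ y \<or> w = x @ [False,True,True] @ y"
      using normal_word_or_reducible by blast
    obtain w' where smaller: "inversions w' < inversions w" and len: "length w' = length w"
      and count: "count_list w' True = count_list w True" and rel: "fmono w + fmono w' \<in> (relIdeal :: 'a free set)"
    proof (cases "w = x @ [False,False,True] @ y")
      case True
      show ?thesis
        by (rule that[of "x @ [True,False,False] @ y"])
          (use True inversions_ddu[of x y] relator_ddu_in_relIdeal[of x y] in simp_all)
    next
      case False
      then have "w = x @ [False,True,True] @ y" using xy by blast
      show ?thesis
        by (rule that[of "x @ [True,True,False] @ y"])
          (use \<open>w = _\<close> inversions_duu[of x y] relator_duu_in_relIdeal[of x y] in simp_all)
    qed
    obtain a b c s where "length (normal_word a b c) = length w'"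
      "count_list (normal_word a b c) True = count_list w' True" and sign: "s = 1 \<or> s = -1"
      and rel': "fmono w' - fscale s (fmono (normal_word a b c)) \<in> (relIdeal :: 'a free set)"
      using less(1)[OF smaller] by blast
    moreover have "fmono w - fscale (-s) (fmono (normal_word a b c)) \<in> (relIdeal :: 'a free set)"
    proof -
      have "fmono w - fscale (-s) (fmono (normal_word a b c))
          = (fmono w + fmono w') - (fmono w' - fscale s (fmono (normal_word a b c)) :: 'a free)"
        by (simp add: fscale_def fun_eq_iff)
      also have "\<dots> \<in> relIdeal"
        using rel rel' unfolding relIdeal_def by (rule free.span_diff)
      finally show ?thesis .
    qed
    moreover have "-s = 1 \<or> -s = -1" using sign by auto
    ultimately show ?thesis
      using len count by (intro exI[of _ a] exI[of _ b] exI[of _ c] exI[of _ "-s"]) auto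
  qed
qed

definition key_functional :: "bool list \<Rightarrow> 'a::field free \<Rightarrow> 'a" where
  "key_functional v p = (\<Sum>w\<in>{w. length w = length v}. if word_key w = word_key v then word_sign w * p w else 0)"

lemma key_functional_fmono:
  "key_functional v (fmono u) = (if length u = length v \<and> word_key u = word_key v then word_sign u else 0)"
proof -
  have "key_functional v (fmono u) = (\<Sum>w\<in>{w. length w = length v}.
      if w = u then (if word_key u = word_key v then word_sign u else 0) else 0)"
    unfolding key_functional_def fmono_def by (intro sum.cong) auto
  also have "\<dots> = (if length u = length v \<and> word_key u = word_key v then word_sign u else 0)"
    by (simp add: sum.delta' finite_length_eq)
  finally show ?thesis .
qed

lemma key_functional_add: "key_functional v (p + q) = key_functional v p + key_functional v q"
  unfolding key_functional_def sum.distrib[symmetric] by (intro sum.cong refl) (simp add: distrib_left)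

lemma key_functional_scale: "key_functional v (fscale c p) = c * key_functional v p"
  unfolding key_functional_def fscale_def sum_distrib_left by (intro sum.cong refl) simp

lemma key_functional_zero: "key_functional v 0 = 0"
  unfolding key_functional_def by (intro sum.neutral) simp

lemma key_functional_relIdeal:
  assumes "p \<in> (relIdeal :: 'a::field free set)"
  shows "key_functional v p = 0"
proof -
  have "p \<in> free.span {fmul (fmul (fmono a) r) (fmono b) | a b r. r = rel1 \<or> r = rel2}"
    using assms by (simp add: relIdeal_def)
  then show ?thesis
  proof (induction rule: free.span_induct_alt)
    case base
    then show ?case by (rule key_functional_zero)
  next
    case (step c x y)
    then obtain a b r where x: "x = fmul (fmul (fmono a) r) (fmono b)" "r = rel1 \<or> r = rel2"
      by blast
    then have "key_functional v x = 0"
      using word_key_ddu[of a b] word_key_duu[of a b]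
      by (auto simp: fmul_rel1 fmul_rel2 key_functional_add key_functional_fmono word_sign_ddu word_sign_duu)
    then show ?case
      using step(2) by (simp only: key_functional_add key_functional_scale) simp
  qed
qed

lemma key_functional_normal_word:
  assumes "v = normal_word a b c" "v' = normal_word a' b' c'" "length v' = length v"
  shows "key_functional v (fmono v') = (if v' = v then word_sign v else (0::'a::field))"
  using assms word_key_normal_word_inj[of a' b' c' a b c] by (auto simp: key_functional_fmono)

section \<open>The idempotents of the skew group algebra\<close>

lemma sum_fun_apply: "(\<Sum>i\<in>A. F i) x = (\<Sum>i\<in>A. F i x)"
  by (induction A rule: infinite_finite_induct) auto

lemma int_mod_nat: "int (a mod n) = int a - int n * int (a div n)"
  by (metis add_diff_cancel_left' div_mult_mod_eq mult.commute of_nat_add of_nat_mult)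

locale primitive_root =
  fixes n :: nat and \<xi> :: "'a::field_char_0"
  assumes n_pos: "0 < n" and root: "\<xi> ^ n = 1"
    and primitive: "\<And>m. 0 < m \<Longrightarrow> m < n \<Longrightarrow> \<xi> ^ m \<noteq> 1"
begin

lemma nonzero: "\<xi> \<noteq> 0"
  using root n_pos by (metis zero_neq_one zero_power)

lemma power_int_mod: "\<xi> powi z = \<xi> powi (z mod int n)"
proof -
  have "z = z mod int n + int n * (z div int n)" by simp
  then have "\<xi> powi z = \<xi> powi (z mod int n) * (\<xi> powi int n) powi (z div int n)"
    by (metis power_int_add power_int_mult nonzero)
  then show ?thesis using root by simp
qed

lemma power_int_cong: "z mod int n = z' mod int n \<Longrightarrow> \<xi> powi z = \<xi> powi z'"
  by (metis power_int_mod)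

lemma power_int_eq_1_iff: "\<xi> powi z = 1 \<longleftrightarrow> z mod int n = 0"
proof
  assume one: "\<xi> powi z = 1"
  show "z mod int n = 0"
  proof (rule ccontr)
    assume "z mod int n \<noteq> 0"
    moreover have "0 \<le> z mod int n" "z mod int n < int n" using n_pos by auto
    ultimately have "0 < nat (z mod int n)" "nat (z mod int n) < n" by linarith+
    moreover have "\<xi> powi z = \<xi> ^ nat (z mod int n)"
      using power_int_mod[of z] n_pos by (simp add: power_int_def)
    ultimately show False using primitive one by auto
  qed
qed (use power_int_mod[of z] in simp)

lemma sum_powers_power_int: "(\<Sum>x<n. (\<xi> powi z) ^ x) = (if z mod int n = 0 then of_nat n else 0)"
proof (cases "z mod int n = 0")
  case True
  then have "\<xi> powi z = 1" using power_int_eq_1_iff by simp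
  then show ?thesis using True by simp
next
  case False
  have "(\<xi> powi z) ^ n = \<xi> powi (z * int n)"
    by (metis power_int_mult power_int_of_nat)
  then have "(\<xi> powi z) ^ n = 1"
    using power_int_eq_1_iff[of "z * int n"] by simp
  then show ?thesis using False power_int_eq_1_iff[of z] by (simp add: sum_gp_strict)
qed

end

definition skunit :: "'a::field skew" where
  "skunit = (\<lambda>w m. if w = [] \<and> m = 0 then 1 else 0)"

lemma skmul_scalar_left:
  assumes "\<And>w' x. w' \<noteq> [] \<Longrightarrow> A w' x = 0"
  shows "skmul n \<xi> A X w c = (if c < n then
           (\<Sum>x<n. A [] x * \<xi> powi (int x * wt w) * X w ((c + n - x) mod n)) else 0)"
proof -
  have "(\<Sum>x<n. A (take k w) x * \<xi> powi (int x * wt (drop k w)) * X (drop k w) ((c + n - x) mod n))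
      = (if k = 0 then (\<Sum>x<n. A [] x * \<xi> powi (int x * wt w) * X w ((c + n - x) mod n)) else 0)"
    if "k \<le> length w" for k
    using that by (cases w) (auto simp: assms)
  then show ?thesis by (simp add: skmul_def)
qed

lemma skmul_scalar_right:
  assumes "\<And>w' x. w' \<noteq> [] \<Longrightarrow> H w' x = 0"
  shows "skmul n \<xi> F H w c = (if c < n then (\<Sum>x<n. F w x * H [] ((c + n - x) mod n)) else 0)"
proof -
  have "(\<Sum>x<n. F (take k w) x * \<xi> powi (int x * wt (drop k w)) * H (drop k w) ((c + n - x) mod n))
      = (if k = length w then (\<Sum>x<n. F w x * H [] ((c + n - x) mod n)) else 0)"
    if "k \<le> length w" for k
    using that by (auto simp: assms wt_def)
  then show ?thesis by (simp add: skmul_def)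
qed

lemma add_diff_mod_eq_0_iff: "x < n \<Longrightarrow> c < n \<Longrightarrow> (c + n - x) mod (n::nat) = 0 \<longleftrightarrow> x = c"
proof (cases "x \<le> c")
  case True
  assume "x < n" "c < n"
  then have "(c + n - x) mod n = c - x"
    using True by (metis Nat.add_diff_assoc2 less_imp_diff_less mod_add_self2 mod_less)
  then show ?thesis using True by auto
qed auto

lemma sum_rotate:
  assumes "x < (n::nat)"
  shows "(\<Sum>y<n. F y ((y + n - x) mod n)) = (\<Sum>m<n. F ((m + x) mod n) m)"
proof -
  have left_inverse: "((y + n - x) mod n + x) mod n = y" if "y < n" for y
  proof -
    have "((y + n - x) mod n + x) mod n = (y + n - x + x) mod n" by (simp add: mod_add_left_eq)
    then show ?thesis using assms that by simp
  qed
  have right_inverse: "((m + x) mod n + n - x) mod n = m" if "m < n" for m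
  proof (cases "m + x < n")
    case True
    then have "(m + x) mod n + n - x = m + n" by simp
    then show ?thesis using that by simp
  next
    case False
    then have "(m + x) mod n + n - x = m" using assms that by (simp add: le_mod_geq)
    then show ?thesis using that by simp
  qed
  show ?thesis
    by (rule sum.reindex_bij_witness[where i="\<lambda>m. (m + x) mod n" and j="\<lambda>y. (y + n - x) mod n"])
      (auto simp: left_inverse right_inverse)
qed

context primitive_root
begin

lemma ftot_eq_skunit: "ftot n \<xi> = skunit"
proof (intro ext)
  fix w m
  have geometric: "(\<Sum>i<n. \<xi> ^ (i * m)) = (if m = 0 then of_nat n else 0)" if "m < n"
  proof -
    have "(\<Sum>i<n. \<xi> ^ (i * m)) = (\<Sum>i<n. (\<xi> powi int m) ^ i)"
      by (intro sum.cong refl) (metis power_int_of_nat power_mult mult.commute)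
    then show ?thesis using that sum_powers_power_int[of "int m"] by simp
  qed
  have "ftot n \<xi> w m = (if w = [] \<and> m < n then inverse (of_nat n) * (\<Sum>i<n. \<xi> ^ (i * m)) else 0)"
    by (auto simp: ftot_def sum_fun_apply fidem_def sum_distrib_left)
  then show "ftot n \<xi> w m = skunit w m"
    using geometric n_pos by (auto simp: skunit_def)
qed

lemma skmul_skunit_left:
  assumes "\<And>w m. m \<ge> n \<Longrightarrow> X w m = 0"
  shows "skmul n \<xi> skunit X = X"
proof (intro ext)
  fix w c
  have "(\<Sum>x<n. skunit [] x * \<xi> powi (int x * wt w) * X w ((c + n - x) mod n))
      = (\<Sum>x<n. if x = 0 then X w ((c + n - x) mod n) else 0)"
    by (intro sum.cong) (auto simp: skunit_def)
  then show "skmul n \<xi> skunit X w c = X w c"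
    using assms[of c w] n_pos by (subst skmul_scalar_left) (auto simp: skunit_def)
qed

lemma skmul_skunit_right:
  assumes "\<And>w m. m \<ge> n \<Longrightarrow> X w m = 0"
  shows "skmul n \<xi> X skunit = X"
proof (intro ext)
  fix w c
  have "(\<Sum>x<n. X w x * skunit [] ((c + n - x) mod n)) = (\<Sum>x<n. if x = c then X w x else 0)"
    if "c < n"
    using add_diff_mod_eq_0_iff[OF _ that] by (intro sum.cong) (auto simp: skunit_def)
  then show "skmul n \<xi> X skunit w c = X w c"
    using assms[of c w] by (subst skmul_scalar_right) (auto simp: skunit_def)
qed

lemma root_exponent_rotate:
  assumes "x < n" "m < n" "c < n"
  shows "\<xi> ^ (i * x) * \<xi> powi (int x * t) * \<xi> ^ (j * ((c + n - (m + x) mod n) mod n))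
       = (\<xi> powi (int i + t - int j)) ^ x * \<xi> ^ (j * ((c + n - m) mod n))"
proof -
  define d1 where "d1 = int ((c + n - (m + x) mod n) div n)"
  define d2 where "d2 = int ((m + x) div n)"
  define d3 where "d3 = int ((c + n - m) div n)"
  have "(m + x) mod n < n" using n_pos by simp
  then have e1: "int ((c + n - (m + x) mod n) mod n) = int c + int n - int ((m + x) mod n) - int n * d1"
    using int_mod_nat[of "c + n - (m + x) mod n"] unfolding d1_def by (simp add: of_nat_diff)
  have e2: "int ((m + x) mod n) = int m + int x - int n * d2"
    using int_mod_nat[of "m + x"] unfolding d2_def by simp
  have e3: "int ((c + n - m) mod n) = int c + int n - int m - int n * d3"
    using int_mod_nat[of "c + n - m"] assms unfolding d3_def by (simp add: of_nat_diff)
  have add: "\<And>a b. \<xi> powi (a + b) = \<xi> powi a * \<xi> powi b" using nonzero by (simp add: power_int_add)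
  have nat_mult: "\<And>a b. \<xi> ^ (a * b) = \<xi> powi (int a * int b)" by (metis power_int_of_nat of_nat_mult)
  have "(int i * int x + int x * t + int j * int ((c + n - (m + x) mod n) mod n))
      - ((int i + t - int j) * int x + int j * int ((c + n - m) mod n)) = int n * (int j * (d2 - d1 + d3))"
    unfolding e1 e2 e3 by (simp add: algebra_simps)
  then have "\<xi> powi (int i * int x + int x * t + int j * int ((c + n - (m + x) mod n) mod n))
      = \<xi> powi ((int i + t - int j) * int x + int j * int ((c + n - m) mod n))"
    by (intro power_int_cong) (simp add: mod_eq_dvd_iff)
  then show ?thesis
    unfolding add nat_mult power_int_mult by simp
qed

lemma root_exponent_split:
  assumes "m < n" "c < n"
  shows "\<xi> ^ (j * ((c + n - m) mod n)) = \<xi> ^ (j * c) * \<xi> ^ (j * ((n - m) mod n))"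
proof -
  define d1 where "d1 = int ((c + n - m) div n)"
  define d2 where "d2 = int ((n - m) div n)"
  have e1: "int ((c + n - m) mod n) = int c + int n - int m - int n * d1"
    using int_mod_nat[of "c + n - m"] assms unfolding d1_def by (simp add: of_nat_diff)
  have e2: "int ((n - m) mod n) = int n - int m - int n * d2"
    using int_mod_nat[of "n - m"] assms unfolding d2_def by (simp add: of_nat_diff)
  have add: "\<And>a b. \<xi> powi (a + b) = \<xi> powi a * \<xi> powi b" using nonzero by (simp add: power_int_add)
  have nat_mult: "\<And>a b. \<xi> ^ (a * b) = \<xi> powi (int a * int b)" by (metis power_int_of_nat of_nat_mult)
  have "int j * int ((c + n - m) mod n) - (int j * int c + int j * int ((n - m) mod n)) = int n * (int j * (d2 - d1))"
    unfolding e1 e2 by (simp add: algebra_simps)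
  then have "\<xi> powi (int j * int ((c + n - m) mod n)) = \<xi> powi (int j * int c + int j * int ((n - m) mod n))"
    by (intro power_int_cong) (simp add: mod_eq_dvd_iff)
  then show ?thesis unfolding add nat_mult .
qed

text \<open>Averaging over the group collapses the sum over x to the weight condition.\<close>
lemma corner_sum_collapse:
  assumes "c < n"
  shows "(\<Sum>y<n. (\<Sum>x<n. (inverse (of_nat n) * \<xi> ^ (i * x)) * \<xi> powi (int x * t) * G ((y + n - x) mod n))
                 * (inverse (of_nat n) * \<xi> ^ (j * ((c + n - y) mod n))))
       = (if (int i + t - int j) mod int n = 0
          then inverse (of_nat n) * (\<Sum>m<n. \<xi> ^ (j * ((c + n - m) mod n)) * G m) else 0)"
proof -
  define a where "a x = inverse (of_nat n) * \<xi> ^ (i * x) * \<xi> powi (int x * t)" for x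
  define b where "b y = inverse (of_nat n) * \<xi> ^ (j * ((c + n - y) mod n))" for y
  define r where "r = \<xi> powi (int i + t - int j)"
  define s where "s = (\<Sum>m<n. \<xi> ^ (j * ((c + n - m) mod n)) * G m)"
  have "(\<Sum>y<n. (\<Sum>x<n. (inverse (of_nat n) * \<xi> ^ (i * x)) * \<xi> powi (int x * t) * G ((y + n - x) mod n))
                 * (inverse (of_nat n) * \<xi> ^ (j * ((c + n - y) mod n))))
      = (\<Sum>x<n. \<Sum>y<n. a x * b y * G ((y + n - x) mod n))"
    unfolding a_def b_def sum_distrib_right by (subst sum.swap) (simp add: algebra_simps)
  also have "\<dots> = (\<Sum>x<n. \<Sum>m<n. a x * b ((m + x) mod n) * G m)"
  proof (rule sum.cong[OF refl])
    fix x assume "x \<in> {..<n}"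
    then show "(\<Sum>y<n. a x * b y * G ((y + n - x) mod n)) = (\<Sum>m<n. a x * b ((m + x) mod n) * G m)"
      using sum_rotate[of x n "\<lambda>y z. a x * b y * G z"] by simp
  qed
  also have "\<dots> = (\<Sum>x<n. \<Sum>m<n. (inverse (of_nat n) * inverse (of_nat n)) * (r ^ x * (\<xi> ^ (j * ((c + n - m) mod n)) * G m)))"
    using root_exponent_rotate assms unfolding a_def b_def r_def
    by (intro sum.cong refl) (simp add: algebra_simps)
  also have "\<dots> = (inverse (of_nat n) * inverse (of_nat n)) * ((\<Sum>x<n. r ^ x) * s)"
    unfolding s_def sum_product by (simp only: sum_distrib_left)
  also have "\<dots> = (if (int i + t - int j) mod int n = 0 then inverse (of_nat n) * s else 0)"
    unfolding r_def sum_powers_power_int using n_pos by simp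
  finally show ?thesis unfolding s_def .
qed

end

definition corner :: "nat \<Rightarrow> 'a::field \<Rightarrow> nat \<Rightarrow> nat \<Rightarrow> 'a skew \<Rightarrow> 'a skew" where
  "corner n \<xi> i j X = (\<lambda>w c. if c < n \<and> (int i + wt w - int j) mod int n = 0
     then inverse (of_nat n) * (\<Sum>m<n. \<xi> ^ (j * ((c + n - m) mod n)) * X w m) else 0)"

context primitive_root
begin

lemma skmul_fidem_eq_corner:
  assumes "\<And>w m. m \<ge> n \<Longrightarrow> X w m = 0"
  shows "skmul n \<xi> (skmul n \<xi> (fidem n \<xi> i) (skmul n \<xi> (skmul n \<xi> (ftot n \<xi>) X) (ftot n \<xi>))) (fidem n \<xi> j)
     = corner n \<xi> i j X"
proof (intro ext)
  fix w c
  have ftot_X: "skmul n \<xi> (skmul n \<xi> (ftot n \<xi>) X) (ftot n \<xi>) = X"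
    using assms by (simp add: ftot_eq_skunit skmul_skunit_left skmul_skunit_right)
  define Y where "Y = skmul n \<xi> (fidem n \<xi> i) X"
  have Y: "Y w y = (if y < n then (\<Sum>x<n. (inverse (of_nat n) * \<xi> ^ (i * x)) * \<xi> powi (int x * wt w)
                     * X w ((y + n - x) mod n)) else 0)" for y
    unfolding Y_def by (subst skmul_scalar_left[where A="fidem n \<xi> i"]) (simp_all add: fidem_def)
  have "skmul n \<xi> Y (fidem n \<xi> j) w c
      = (if c < n then (\<Sum>y<n. Y w y * fidem n \<xi> j [] ((c + n - y) mod n)) else 0)"
    by (rule skmul_scalar_right) (simp add: fidem_def)
  also have "\<dots> = (if c < n then (\<Sum>y<n. (\<Sum>x<n. (inverse (of_nat n) * \<xi> ^ (i * x)) * \<xi> powi (int x * wt w)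
                     * X w ((y + n - x) mod n)) * (inverse (of_nat n) * \<xi> ^ (j * ((c + n - y) mod n)))) else 0)"
    using n_pos by (simp add: Y fidem_def)
  also have "\<dots> = corner n \<xi> i j X w c"
    by (cases "c < n") (simp_all add: corner_def corner_sum_collapse)
  finally show "skmul n \<xi> (skmul n \<xi> (fidem n \<xi> i) (skmul n \<xi> (skmul n \<xi> (ftot n \<xi>) X) (ftot n \<xi>)))
      (fidem n \<xi> j) w c = corner n \<xi> i j X w c"
    unfolding ftot_X Y_def .
qed

lemma cornerRep_eq_corner_image: "cornerRep n \<xi> k i j = corner n \<xi> i j ` skdeg n k"
  unfolding cornerRep_def Setcompr_eq_image
  by (rule image_cong[OF refl]) (simp add: skdeg_def skmul_fidem_eq_corner)

end

section \<open>The dimension of a corner\<close>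

lemma (in vector_space) dim_Un_separated_image:
  assumes "finite D" "J \<subseteq> span D" "finite G"
    and K_subspace: "\<And>v. v \<in> G \<Longrightarrow> subspace (K v)" and J_in_K: "\<And>v. v \<in> G \<Longrightarrow> J \<subseteq> K v"
    and separating: "\<And>v v'. v \<in> G \<Longrightarrow> v' \<in> G \<Longrightarrow> Y v' \<in> K v \<longleftrightarrow> v' \<noteq> v"
  shows "dim (J \<union> Y ` G) = dim J + card G"
proof -
  obtain B where B: "B \<subseteq> J" "independent B" "J \<subseteq> span B" "card B = dim J"
    using basis_exists[of J] by blast
  have "finite B"
    using independent_span_bound[OF assms(1) B(2)] B(1) assms(2) by blast
  have Y_notin_span: "Y v \<notin> span (B \<union> Y ` H)" if "v \<in> G" "H \<subseteq> G" "v \<notin> H" for v H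
  proof -
    have "span (B \<union> Y ` H) \<subseteq> K v"
      using that B(1) J_in_K separating by (intro span_minimal K_subspace) blast+
    then show ?thesis using separating[of v v] that(1) by blast
  qed
  have independent: "independent (B \<union> Y ` H)" if "finite H" "H \<subseteq> G" for H
    using that
  proof (induction H rule: finite_induct)
    case empty
    then show ?case using B(2) by simp
  next
    case (insert v H)
    then have "independent (insert (Y v) (B \<union> Y ` H))"
      using Y_notin_span[of v H] by (intro independent_insertI) auto
    then show ?case by simp
  qed
  have "inj_on Y G"
  proof (rule inj_onI)
    fix v v' assume v: "v \<in> G" and v': "v' \<in> G" and eq: "Y v = Y v'"
    show "v = v'"
    proof (rule ccontr)
      assume "v \<noteq> v'"
      then have "Y v' \<in> K v" using separating[OF v v'] by simp
      then show False using separating[OF v v] eq by simp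
    qed
  qed
  moreover have "Y v \<notin> B" if "v \<in> G" for v
    using B(1) J_in_K[OF that] separating[OF that that] by blast
  then have "B \<inter> Y ` G = {}" by blast
  moreover have "span (J \<union> Y ` G) = span (B \<union> Y ` G)"
    using B(1,3) span_mono[of B "B \<union> Y ` G"] by (auto simp: span_eq intro: span_base)
  then have "dim (J \<union> Y ` G) = card (B \<union> Y ` G)"
    using span_eq_dim dim_eq_card_independent[OF independent[OF assms(3) order_refl]] by metis
  ultimately show ?thesis
    using \<open>finite B\<close> assms(3) B(4) by (simp add: card_Un_disjoint card_image)
qed

interpretation skew: vector_space "sscale :: 'a::field \<Rightarrow> 'a skew \<Rightarrow> 'a skew"
  by unfold_locales (auto simp: sscale_def algebra_simps fun_eq_iff)

definition skmono :: "bool list \<Rightarrow> nat \<Rightarrow> 'a::field skew" where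
  "skmono v m = (\<lambda>w c. if w = v \<and> c = m then 1 else 0)"

lemma skdeg_subset_span_skmono:
  "skdeg n k \<subseteq> skew.span ((\<lambda>(v, m). skmono v m) ` ({v. length v = k} \<times> {..<n}))"
proof
  fix X :: "'a skew"
  assume X: "X \<in> skdeg n k"
  let ?A = "{v :: bool list. length v = k} \<times> {..<n}"
  have "finite ?A" using finite_length_eq[of k] by simp
  have "X = (\<Sum>p\<in>?A. sscale (X (fst p) (snd p)) (skmono (fst p) (snd p)))"
  proof (intro ext)
    fix w c
    have "(\<Sum>p\<in>?A. sscale (X (fst p) (snd p)) (skmono (fst p) (snd p))) w c
        = (\<Sum>p\<in>?A. if p = (w, c) then X w c else 0)"
      unfolding sum_fun_apply by (intro sum.cong refl) (auto simp: sscale_def skmono_def)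
    also have "\<dots> = X w c"
      using X \<open>finite ?A\<close> by (auto simp: sum.delta skdeg_def)
    finally show "X w c = (\<Sum>p\<in>?A. sscale (X (fst p) (snd p)) (skmono (fst p) (snd p))) w c" by simp
  qed
  also have "\<dots> \<in> skew.span ((\<lambda>(v, m). skmono v m) ` ?A)"
    by (intro skew.span_sum skew.span_scale skew.span_base) (force simp: image_iff)
  finally show "X \<in> skew.span ((\<lambda>(v, m). skmono v m) ` ?A)" .
qed

lemma key_functional_kernel_subspace:
  "skew.subspace {X :: 'a::field skew. key_functional v (\<lambda>w. X w m) = 0}"
proof -
  have "(\<lambda>w. (0 :: 'a skew) w m) = 0" "(\<lambda>w. (X + Y) w m) = (\<lambda>w. X w m) + (\<lambda>w. Y w m)"
    "(\<lambda>w. sscale c X w m) = fscale c (\<lambda>w. X w m)" for X Y :: "'a skew" and c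
    by (simp_all add: fun_eq_iff sscale_def fscale_def)
  then show ?thesis
    by (simp add: skew.subspace_def key_functional_zero key_functional_add key_functional_scale)
qed

text \<open>The element n (v # f_j) of R # kG.\<close>
definition word_fidem :: "nat \<Rightarrow> 'a::field \<Rightarrow> nat \<Rightarrow> bool list \<Rightarrow> 'a skew" where
  "word_fidem n \<xi> j v = (\<lambda>w c. if w = v \<and> c < n then \<xi> ^ (j * c) else 0)"

definition corner_basis :: "nat \<Rightarrow> nat \<Rightarrow> nat \<Rightarrow> nat \<Rightarrow> bool list set" where
  "corner_basis n k i j =
     {v. (\<exists>a b c. v = normal_word a b c) \<and> length v = k \<and> (int i + wt v - int j) mod int n = 0}"

lemma finite_corner_basis: "finite (corner_basis n k i j)"
  by (rule finite_subset[OF _ finite_length_eq[of k]]) (auto simp: corner_basis_def)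

context primitive_root
begin

lemma word_fidem_in_cornerRep:
  assumes "length v = k" "(int i + wt v - int j) mod int n = 0"
  shows "word_fidem n \<xi> j v \<in> cornerRep n \<xi> k i j"
proof -
  define X where "X = (\<lambda>(w::bool list) (m::nat). if w = v \<and> m = 0 then (of_nat n :: 'a) else 0)"
  have "X \<in> skdeg n k" using assms n_pos by (auto simp: X_def skdeg_def)
  moreover have "corner n \<xi> i j X = word_fidem n \<xi> j v"
  proof (intro ext)
    fix w c
    have "(\<Sum>m<n. \<xi> ^ (j * ((c + n - m) mod n)) * X w m)
        = (\<Sum>m<n. if m = 0 then (if w = v then \<xi> ^ (j * ((c + n) mod n)) * of_nat n else 0) else 0)"
      by (intro sum.cong refl) (auto simp: X_def)
    also have "\<dots> = (if w = v then \<xi> ^ (j * ((c + n) mod n)) * of_nat n else 0)"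
      using n_pos by (simp add: sum.delta)
    finally show "corner n \<xi> i j X w c = word_fidem n \<xi> j v w c"
      using assms n_pos by (auto simp: corner_def word_fidem_def)
  qed
  ultimately show ?thesis
    unfolding cornerRep_eq_corner_image by (metis image_eqI)
qed

lemma word_fidem_in_span:
  assumes "length w = k" "(int i + wt w - int j) mod int n = 0"
  shows "word_fidem n \<xi> j w \<in> skew.span (idealdeg n k \<union> word_fidem n \<xi> j ` corner_basis n k i j)"
proof -
  obtain a b c s where normal: "length (normal_word a b c) = length w"
    "count_list (normal_word a b c) True = count_list w True" "s = 1 \<or> s = -1"
    and congruent: "fmono w - fscale s (fmono (normal_word a b c)) \<in> (relIdeal :: 'a free set)"
    using fmono_congruent_normal_word[of w, where 'a='a] by blast
  define v where "v = normal_word a b c"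
  have v: "v \<in> corner_basis n k i j"
    using normal assms unfolding corner_basis_def v_def by (auto simp: wt_eq_count)
  define D where "D = word_fidem n \<xi> j w - sscale s (word_fidem n \<xi> j v)"
  have "D \<in> idealdeg n k"
    unfolding idealdeg_def skdeg_def
  proof (intro CollectI conjI allI impI)
    fix w' :: "bool list" and m :: nat
    assume "n \<le> m \<or> length w' \<noteq> k"
    then show "D w' m = 0"
      using normal assms by (auto simp: D_def word_fidem_def sscale_def v_def)
  next
    fix m assume "m < n"
    then have "(\<lambda>w'. D w' m) = fscale (\<xi> ^ (j * m)) (fmono w - fscale s (fmono v))"
      by (auto simp: fun_eq_iff D_def word_fidem_def sscale_def fscale_def fmono_def algebra_simps)
    then show "(\<lambda>w'. D w' m) \<in> relIdeal"
      using congruent unfolding relIdeal_def v_def by (simp add: free.span_scale)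
  qed
  then have "D + sscale s (word_fidem n \<xi> j v)
      \<in> skew.span (idealdeg n k \<union> word_fidem n \<xi> j ` corner_basis n k i j)"
    using v by (intro skew.span_add skew.span_scale skew.span_base) auto
  then show ?thesis by (simp add: D_def)
qed

lemma corner_in_span:
  assumes X: "X \<in> skdeg n k"
  shows "corner n \<xi> i j X \<in> skew.span (idealdeg n k \<union> word_fidem n \<xi> j ` corner_basis n k i j)"
proof -
  define W where "W = {w. length w = k \<and> (int i + wt w - int j) mod int n = 0}"
  define \<alpha> where "\<alpha> w = inverse (of_nat n) * (\<Sum>m<n. \<xi> ^ (j * ((n - m) mod n)) * X w m)" for w
  have "finite W" by (rule finite_subset[OF _ finite_length_eq[of k]]) (auto simp: W_def)
  have "corner n \<xi> i j X = (\<Sum>w\<in>W. sscale (\<alpha> w) (word_fidem n \<xi> j w))"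
  proof (intro ext)
    fix w' c
    have "(\<Sum>w\<in>W. sscale (\<alpha> w) (word_fidem n \<xi> j w)) w' c
        = (\<Sum>w\<in>W. if w = w' then (if c < n then \<alpha> w' * \<xi> ^ (j * c) else 0) else 0)"
      unfolding sum_fun_apply by (intro sum.cong refl) (auto simp: sscale_def word_fidem_def)
    also have "\<dots> = (if w' \<in> W \<and> c < n then \<alpha> w' * \<xi> ^ (j * c) else 0)"
      using \<open>finite W\<close> by (simp add: sum.delta)
    also have "\<dots> = corner n \<xi> i j X w' c"
    proof (cases "c < n \<and> (int i + wt w' - int j) mod int n = 0 \<and> length w' = k")
      case True
      then have "(\<Sum>m<n. \<xi> ^ (j * ((c + n - m) mod n)) * X w' m)
          = \<xi> ^ (j * c) * (\<Sum>m<n. \<xi> ^ (j * ((n - m) mod n)) * X w' m)"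
        unfolding sum_distrib_left by (intro sum.cong refl) (simp add: root_exponent_split)
      then show ?thesis using True by (simp add: corner_def \<alpha>_def W_def algebra_simps)
    next
      case False
      moreover have "X w' m = 0" if "length w' \<noteq> k" for m
        using X that by (simp add: skdeg_def)
      ultimately show ?thesis by (auto simp: corner_def W_def)
    qed
    finally show "corner n \<xi> i j X w' c = (\<Sum>w\<in>W. sscale (\<alpha> w) (word_fidem n \<xi> j w)) w' c" by simp
  qed
  also have "\<dots> \<in> skew.span (idealdeg n k \<union> word_fidem n \<xi> j ` corner_basis n k i j)"
    by (intro skew.span_sum skew.span_scale word_fidem_in_span) (auto simp: W_def)
  finally show ?thesis .
qed

lemma hdim_eq_card_corner_basis: "hdim n \<xi> k i j = card (corner_basis n k i j)"
proof -
  let ?J = "idealdeg n k :: 'a skew set" and ?G = "corner_basis n k i j" and ?Y = "word_fidem n \<xi> j"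
  define K where "K v = {X :: 'a skew. key_functional v (\<lambda>w. X w 0) = 0}" for v
  have separating: "?Y v' \<in> K v \<longleftrightarrow> v' \<noteq> v" if v: "v \<in> ?G" and v': "v' \<in> ?G" for v v'
  proof -
    obtain a b c where "v = normal_word a b c" using v unfolding corner_basis_def by blast
    moreover obtain a' b' c' where "v' = normal_word a' b' c'" using v' unfolding corner_basis_def by blast
    moreover have "length v' = length v" using v v' by (simp add: corner_basis_def)
    ultimately have "key_functional v (fmono v') = (if v' = v then word_sign v else 0)"
      by (rule key_functional_normal_word)
    moreover have "(\<lambda>w. ?Y v' w 0) = fmono v'"
      using n_pos by (simp add: fun_eq_iff word_fidem_def fmono_def)
    ultimately show ?thesis
      using word_sign_nonzero[of v] by (auto simp: K_def)
  qed
  have "?J \<subseteq> skew.span ((\<lambda>(v, m). skmono v m) ` ({v. length v = k} \<times> {..<n}))"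
    using skdeg_subset_span_skmono by (auto simp: idealdeg_def)
  moreover have "?J \<subseteq> K v" for v
    using n_pos by (auto simp: K_def idealdeg_def intro: key_functional_relIdeal)
  ultimately have "skew.dim (?J \<union> ?Y ` ?G) = skew.dim ?J + card ?G"
    using separating finite_corner_basis finite_length_eq[of k] key_functional_kernel_subspace
    by (intro skew.dim_Un_separated_image[where K = K]) (auto simp: K_def)
  moreover have "skew.span (cornerRep n \<xi> k i j \<union> ?J) = skew.span (?J \<union> ?Y ` ?G)"
    using corner_in_span word_fidem_in_cornerRep
    by (auto simp: skew.span_eq cornerRep_eq_corner_image corner_basis_def intro: skew.span_base)
  ultimately show ?thesis
    unfolding hdim_def by (metis skew.span_eq_dim add_diff_cancel_left')
qed

end

section \<open>Counting normal words\<close>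

definition mod_indicator :: "nat \<Rightarrow> int \<Rightarrow> 'a::zero_neq_one" where
  "mod_indicator n r = (if r mod int n = 0 then 1 else 0)"

definition weight_triples :: "nat \<Rightarrow> nat \<Rightarrow> int \<Rightarrow> (nat \<times> nat \<times> nat) set" where
  "weight_triples n k r = {(a, b, c). a + 2 * b + c = k \<and> (int a - int c - r) mod int n = 0}"

definition weight_pairs :: "nat \<Rightarrow> nat \<Rightarrow> int \<Rightarrow> (nat \<times> nat) set" where
  "weight_pairs n k r = {(a, c). a + c = k \<and> (int a - int c - r) mod int n = 0}"

lemma finite_weight_triples: "finite (weight_triples n k r)"
  by (rule finite_subset[of _ "{..k} \<times> {..k} \<times> {..k}"]) (auto simp: weight_triples_def)

lemma finite_weight_pairs: "finite (weight_pairs n k r)"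
  by (rule finite_subset[of _ "{..k} \<times> {..k}"]) (auto simp: weight_pairs_def)

lemma weight_triples_split:
  "weight_triples n k r = (\<lambda>(a, c). (a, 0, c)) ` weight_pairs n k r \<union>
     (if k \<ge> 2 then (\<lambda>(a, b, c). (a, Suc b, c)) ` weight_triples n (k - 2) r else {})"
proof (rule equalityI; rule subsetI)
  fix t assume "t \<in> weight_triples n k r"
  then obtain a b c where t: "t = (a, b, c)" "a + 2 * b + c = k" "(int a - int c - r) mod int n = 0"
    by (auto simp: weight_triples_def)
  show "t \<in> (\<lambda>(a, c). (a, 0, c)) ` weight_pairs n k r \<union>
     (if k \<ge> 2 then (\<lambda>(a, b, c). (a, Suc b, c)) ` weight_triples n (k - 2) r else {})"
  proof (cases b)
    case 0
    then have "(a, c) \<in> weight_pairs n k r" using t by (simp add: weight_pairs_def)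
    then show ?thesis using t 0 by (auto intro!: image_eqI[of _ _ "(a, c)"])
  next
    case (Suc b')
    then have "k \<ge> 2" and "(a, b', c) \<in> weight_triples n (k - 2) r"
      using t by (auto simp: weight_triples_def)
    then show ?thesis using t Suc by (auto intro!: image_eqI[of _ _ "(a, b', c)"])
  qed
qed (auto simp: weight_triples_def weight_pairs_def split: if_splits)

lemma card_weight_triples:
  "card (weight_triples n k r) = card (weight_pairs n k r) + (if k \<ge> 2 then card (weight_triples n (k - 2) r) else 0)"
proof -
  have inj_pairs: "inj_on (\<lambda>(a, c). (a, 0::nat, c)) (weight_pairs n k r)"
    and inj_triples: "inj_on (\<lambda>(a, b, c). (a, Suc b, c)) (weight_triples n (k - 2) r)"
    by (auto simp: inj_on_def)
  have disjoint: "(\<lambda>(a, c). (a, 0::nat, c)) ` weight_pairs n k r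
      \<inter> (\<lambda>(a, b, c). (a, Suc b, c)) ` weight_triples n (k - 2) r = {}"
    by auto
  show ?thesis
    unfolding weight_triples_split[of n k r]
    using card_Un_disjoint[OF finite_imageI[OF finite_weight_pairs] finite_imageI[OF finite_weight_triples] disjoint]
      card_image[OF inj_pairs] card_image[OF inj_triples]
    by auto
qed

lemma mod_neg_diff_eq_0_iff: "(- int k - r) mod int n = 0 \<longleftrightarrow> (r + int k) mod int n = 0"
proof -
  have "- int k - r = - (r + int k)" by simp
  then show ?thesis by (simp only: mod_eq_0_iff_dvd dvd_minus_iff)
qed

lemma weight_pairs_split:
  "weight_pairs n k r = (if (r + int k) mod int n = 0 then {(0, k)} else {}) \<union>
     (if k \<ge> 1 then (\<lambda>(a, c). (Suc a, c)) ` weight_pairs n (k - 1) (r - 1) else {})"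
proof (rule equalityI; rule subsetI)
  fix t assume "t \<in> weight_pairs n k r"
  then obtain a c where t: "t = (a, c)" "a + c = k" "(int a - int c - r) mod int n = 0"
    by (auto simp: weight_pairs_def)
  show "t \<in> (if (r + int k) mod int n = 0 then {(0, k)} else {}) \<union>
     (if k \<ge> 1 then (\<lambda>(a, c). (Suc a, c)) ` weight_pairs n (k - 1) (r - 1) else {})"
  proof (cases a)
    case 0
    then show ?thesis using t mod_neg_diff_eq_0_iff[of k r n] by auto
  next
    case (Suc a')
    then have "k \<ge> 1" and "(a', c) \<in> weight_pairs n (k - 1) (r - 1)"
      using t by (auto simp: weight_pairs_def algebra_simps)
    then show ?thesis using t Suc by (auto intro!: image_eqI[of _ _ "(a', c)"])
  qed
next
  fix t assume "t \<in> (if (r + int k) mod int n = 0 then {(0, k)} else {}) \<union>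
     (if k \<ge> 1 then (\<lambda>(a, c). (Suc a, c)) ` weight_pairs n (k - 1) (r - 1) else {})"
  then consider "(r + int k) mod int n = 0" "t = (0, k)"
    | a c where "t = (Suc a, c)" "k \<ge> 1" "(a, c) \<in> weight_pairs n (k - 1) (r - 1)"
    by (auto split: if_splits)
  then show "t \<in> weight_pairs n k r"
  proof cases
    case 1
    then show ?thesis using mod_neg_diff_eq_0_iff[of k r n] by (simp add: weight_pairs_def)
  next
    case 2
    then show ?thesis by (auto simp: weight_pairs_def algebra_simps)
  qed
qed

lemma card_weight_pairs:
  "card (weight_pairs n k r) = mod_indicator n (r + int k)
     + (if k \<ge> 1 then card (weight_pairs n (k - 1) (r - 1)) else 0)"
proof -
  have inj: "inj_on (\<lambda>(a, c). (Suc a, c)) (weight_pairs n (k - 1) (r - 1))"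
    by (auto simp: inj_on_def)
  have disjoint: "(if (r + int k) mod int n = 0 then {(0::nat, k)} else {})
      \<inter> (\<lambda>(a, c). (Suc a, c)) ` weight_pairs n (k - 1) (r - 1) = {}"
    by auto
  show ?thesis
    unfolding weight_pairs_split[of n k r]
    using card_Un_disjoint[OF _ finite_imageI[OF finite_weight_pairs] disjoint] card_image[OF inj]
    by (auto simp: mod_indicator_def)
qed

definition triple_series :: "nat \<Rightarrow> int \<Rightarrow> int fps" where
  "triple_series n r = Abs_fps (\<lambda>k. int (card (weight_triples n k r)))"

definition pair_series :: "nat \<Rightarrow> int \<Rightarrow> int fps" where
  "pair_series n r = Abs_fps (\<lambda>k. int (card (weight_pairs n k r)))"

definition d_power_series :: "nat \<Rightarrow> int \<Rightarrow> int fps" where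
  "d_power_series n r = Abs_fps (\<lambda>k. mod_indicator n (r + int k))"

lemma triple_series_rec: "triple_series n r = pair_series n r + fps_X ^ 2 * triple_series n r"
  by (rule fps_ext) (auto simp: triple_series_def pair_series_def fps_X_power_mult_nth card_weight_triples)

lemma pair_series_rec: "pair_series n r = d_power_series n r + fps_X * pair_series n (r - 1)"
proof (rule fps_ext)
  fix k
  have "int (mod_indicator n x) = mod_indicator n x" for x
    by (simp add: mod_indicator_def)
  then show "fps_nth (pair_series n r) k = fps_nth (d_power_series n r + fps_X * pair_series n (r - 1)) k"
    by (cases k) (auto simp: pair_series_def d_power_series_def card_weight_pairs)
qed

lemma d_power_series_rec: "d_power_series n r = mod_indicator n r + fps_X * d_power_series n (r + 1)"
proof (rule fps_ext)
  fix k
  have "fps_nth (mod_indicator n r :: int fps) k = (if k = 0 then mod_indicator n r else 0)"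
    by (simp add: mod_indicator_def)
  then show "fps_nth (d_power_series n r) k = fps_nth (mod_indicator n r + fps_X * d_power_series n (r + 1)) k"
    by (cases k) (simp_all add: d_power_series_def ac_simps)
qed

lemma triple_series_identity:
  "(1 - fps_X ^ 2) * ((1 + fps_X ^ 2) * triple_series n r
     - fps_X * (triple_series n (r - 1) + triple_series n (r + 1))) = mod_indicator n r"
proof -
  have pairs: "(1 - fps_X ^ 2) * triple_series n r' = pair_series n r'" for r'
    using triple_series_rec[of n r'] by (simp add: algebra_simps)
  have "(1 - fps_X ^ 2) * ((1 + fps_X ^ 2) * triple_series n r
          - fps_X * (triple_series n (r - 1) + triple_series n (r + 1)))
      = (1 + fps_X ^ 2) * pair_series n r - fps_X * (pair_series n (r - 1) + pair_series n (r + 1))"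
    by (simp add: algebra_simps flip: pairs)
  also have "\<dots> = (1 + fps_X ^ 2) * pair_series n r
      - fps_X * (pair_series n (r - 1) + (d_power_series n (r + 1) + fps_X * pair_series n r))"
    using pair_series_rec[of n "r + 1"] by simp
  also have "\<dots> = pair_series n r - fps_X * pair_series n (r - 1) - fps_X * d_power_series n (r + 1)"
    by (simp add: algebra_simps power2_eq_square)
  also have "\<dots> = d_power_series n r - fps_X * d_power_series n (r + 1)"
    using pair_series_rec[of n r] by simp
  also have "\<dots> = mod_indicator n r"
    using d_power_series_rec[of n r] by simp
  finally show ?thesis .
qed

lemma triple_series_mod_cong:
  assumes "r mod int n = r' mod int n"
  shows "triple_series n r = triple_series n r'"
proof -
  have "(x - r) mod int n = (x - r') mod int n" for x
    using assms by (metis mod_diff_right_eq)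
  then show ?thesis by (simp add: triple_series_def weight_triples_def)
qed

lemma sum_triple_series_shift:
  assumes "n > 0"
  shows "(\<Sum>j<n. triple_series n (int j + c)) = (\<Sum>j<n. triple_series n (int j))"
proof -
  define S where "S c = (\<Sum>j<n. triple_series n (int j + c))" for c
  have step: "S (c + 1) = S c" for c
  proof -
    have "S (c + 1) = (\<Sum>j<Suc n. triple_series n (int j + c)) - triple_series n c"
      unfolding S_def by (subst sum.lessThan_Suc_shift) (simp add: algebra_simps)
    also have "\<dots> = S c + triple_series n (int n + c) - triple_series n c"
      unfolding S_def by simp
    also have "triple_series n (int n + c) = triple_series n c"
      by (rule triple_series_mod_cong) simp
    finally show ?thesis by simp
  qed
  have "S c = S 0"
  proof (induction c rule: int_induct[where k=0])
    case (step1 i)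
    then show ?case using step[of i] by simp
  next
    case (step2 i)
    then show ?case using step[of "i - 1"] by simp
  qed simp
  then show ?thesis unfolding S_def by simp
qed

lemma normal_word_inj: "normal_word a b c = normal_word a' b' c' \<Longrightarrow> a = a' \<and> b = b' \<and> c = c'"
  using word_key_normal_word_inj by metis

lemma card_corner_basis: "card (corner_basis n k i j) = card (weight_triples n k (int j - int i))"
proof -
  have weight: "int i + wt (normal_word a b c) - int j = int a - int c - (int j - int i)" for a b c
    by (simp add: wt_normal_word)
  have "corner_basis n k i j = (\<lambda>(a, b, c). normal_word a b c) ` weight_triples n k (int j - int i)"
  proof (rule equalityI; rule subsetI)
    fix v assume "v \<in> corner_basis n k i j"
    then obtain a b c where "v = normal_word a b c" "(a, b, c) \<in> weight_triples n k (int j - int i)"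
      by (auto simp: corner_basis_def weight_triples_def weight length_normal_word)
    then show "v \<in> (\<lambda>(a, b, c). normal_word a b c) ` weight_triples n k (int j - int i)" by force
  qed (auto simp: corner_basis_def weight_triples_def weight length_normal_word)
  moreover have "inj_on (\<lambda>(a, b, c). normal_word a b c) (weight_triples n k (int j - int i))"
    by (auto simp: inj_on_def dest: normal_word_inj)
  ultimately show ?thesis by (simp add: card_image)
qed

lemma adjM_entry:
  assumes "l < n" "j < n"
  shows "adjM n $$ (l, j) = (if (l + 1) mod n = j then 1 else 0) + (if (j + 1) mod n = l then 1 else 0)"
proof -
  have "{a \<in> qarrows n. qsrc n a = l \<and> qtgt n a = j} =
     (if (l + 1) mod n = j then {Inl l} else {}) \<union> (if (j + 1) mod n = l then {Inr j} else {})"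
  proof (rule Set.set_eqI)
    fix a :: "nat + nat"
    show "a \<in> {a \<in> qarrows n. qsrc n a = l \<and> qtgt n a = j} \<longleftrightarrow>
      a \<in> (if (l + 1) mod n = j then {Inl l} else {}) \<union> (if (j + 1) mod n = l then {Inr j} else {})"
      using assms by (cases a) (auto simp: qarrows_def qsrc_def qtgt_def)
  qed
  then show ?thesis using assms by (simp add: adjM_def)
qed

lemma Suc_mod_eq_iff:
  assumes "l < n" "j < (n::nat)"
  shows "(l + 1) mod n = j \<longleftrightarrow> l = (j + n - 1) mod n"
proof (cases j)
  case 0
  have "(l + 1) mod n = 0 \<longleftrightarrow> l + 1 = n"
    using assms by (metis Suc_eq_plus1 Suc_leI le_neq_implies_less mod_less mod_self zero_neq_one
        add_eq_0_iff_both_eq_0 nat.distinct(1))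
  then show ?thesis using 0 assms by auto
next
  case (Suc j')
  then have "(j + n - 1) mod n = j'" using assms by simp
  moreover have "(l + 1) mod n = j \<longleftrightarrow> l = j'"
    using assms Suc by (cases "l + 1 = n") auto
  ultimately show ?thesis by simp
qed

lemma sum_adjM_column:
  fixes F :: "nat \<Rightarrow> 'a::comm_ring_1"
  assumes "j < n"
  shows "(\<Sum>l<n. F l * of_nat (adjM n $$ (l, j))) = F ((j + n - 1) mod n) + F ((j + 1) mod n)"
proof -
  have "F l * of_nat (adjM n $$ (l, j))
      = (if l = (j + n - 1) mod n then F l else 0) + (if l = (j + 1) mod n then F l else 0)" if "l < n" for l
  proof -
    have "adjM n $$ (l, j) = (if l = (j + n - 1) mod n then 1 else 0) + (if l = (j + 1) mod n then 1 else 0)"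
      by (simp only: adjM_entry[OF that assms] Suc_mod_eq_iff[OF that assms] eq_commute[of "(j + 1) mod n" l])
    then show ?thesis by (simp add: distrib_left)
  qed
  then have "(\<Sum>l<n. F l * of_nat (adjM n $$ (l, j)))
      = (\<Sum>l<n. (if l = (j + n - 1) mod n then F l else 0) + (if l = (j + 1) mod n then F l else 0))"
    by (intro sum.cong) auto
  then show ?thesis
    using assms by (simp add: sum.distrib)
qed

definition hilbert_inverse :: "nat \<Rightarrow> int fps mat" where
  "hilbert_inverse n =
     (1 - fps_X\<^sup>2) \<cdot>\<^sub>m (1\<^sub>m n - fps_X \<cdot>\<^sub>m map_mat of_nat (adjM n) + fps_X\<^sup>2 \<cdot>\<^sub>m 1\<^sub>m n)"

lemma hilbert_inverse_entry:
  assumes "l < n" "j < n"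
  shows "hilbert_inverse n $$ (l, j) =
    (1 - fps_X\<^sup>2) * ((1 + fps_X\<^sup>2) * (if l = j then 1 else 0) - fps_X * of_nat (adjM n $$ (l, j)))"
proof -
  have "dim_row (adjM n) = n" "dim_col (adjM n) = n" by (simp_all add: adjM_def)
  then show ?thesis using assms by (simp add: hilbert_inverse_def algebra_simps)
qed

lemma int_mod_diff_cong: "(int (a mod n) - b) mod int n = (int a - b) mod int n"
  by (simp add: zmod_int mod_diff_left_eq)

lemma mod_indicator_diff_eq_one_mat:
  assumes "i < n" "j < n"
  shows "mod_indicator n (int j - int i) = (1\<^sub>m n $$ (i, j) :: int fps)"
proof -
  have "(int j - int i) mod int n = 0 \<longleftrightarrow> i = j"
  proof
    assume "(int j - int i) mod int n = 0"
    then have "int n dvd (int j - int i)" by (simp add: dvd_eq_mod_eq_0)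
    moreover have "\<bar>int j - int i\<bar> < int n" using assms by simp
    ultimately show "i = j" using dvd_imp_le_int[of "int j - int i" "int n"] by (cases "int j - int i = 0") auto
  qed simp
  then show ?thesis using assms by (simp add: mod_indicator_def)
qed

context primitive_root
begin

lemma hilbB_eq_triple_series: "hilbB n \<xi> = mat n n (\<lambda>(i, j). triple_series n (int j - int i))"
proof -
  have "(\<lambda>(i, j). Abs_fps (\<lambda>k. int (hdim n \<xi> k i j))) = (\<lambda>(i, j). triple_series n (int j - int i))"
    by (auto simp: fun_eq_iff triple_series_def hdim_eq_card_corner_basis card_corner_basis)
  then show ?thesis unfolding hilbB_def by simp
qed

lemma hilbB_mult_hilbert_inverse_entry:
  assumes "i < n" "j < n"
  shows "(hilbB n \<xi> * hilbert_inverse n) $$ (i, j) = 1\<^sub>m n $$ (i, j)"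
proof -
  define N where "N l = triple_series n (int l - int i)" for l
  have periodic_pred: "N ((j + n - 1) mod n) = triple_series n (int j - int i - 1)"
    unfolding N_def
  proof (rule triple_series_mod_cong)
    have "(int ((j + n - 1) mod n) - int i) mod int n = (int (j + n - 1) - int i) mod int n"
      by (rule int_mod_diff_cong)
    also have "int (j + n - 1) - int i = (int j - int i - 1) + int n"
      using n_pos by simp
    finally show "(int ((j + n - 1) mod n) - int i) mod int n = (int j - int i - 1) mod int n"
      by simp
  qed
  have periodic_succ: "N ((j + 1) mod n) = triple_series n (int j - int i + 1)"
    unfolding N_def by (intro triple_series_mod_cong) (simp add: int_mod_diff_cong algebra_simps)
  have "(hilbB n \<xi> * hilbert_inverse n) $$ (i, j) = (\<Sum>l<n. N l * hilbert_inverse n $$ (l, j))"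
    using assms by (simp add: hilbB_eq_triple_series hilbert_inverse_def scalar_prod_def N_def
        lessThan_atLeast0)
  also have "\<dots> = (\<Sum>l<n. (if l = j then (1 - fps_X\<^sup>2) * (1 + fps_X\<^sup>2) * N l else 0)
      - (1 - fps_X\<^sup>2) * fps_X * (N l * of_nat (adjM n $$ (l, j))))"
    using assms by (intro sum.cong refl) (simp add: hilbert_inverse_entry algebra_simps)
  also have "\<dots> = (1 - fps_X\<^sup>2) * (1 + fps_X\<^sup>2) * N j
      - (1 - fps_X\<^sup>2) * fps_X * (\<Sum>l<n. N l * of_nat (adjM n $$ (l, j)))"
    using assms by (simp add: sum_subtractf sum_distrib_left)
  also have "\<dots> = (1 - fps_X\<^sup>2) * ((1 + fps_X\<^sup>2) * N j - fps_X * (N ((j + n - 1) mod n) + N ((j + 1) mod n)))"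
    using assms by (simp add: sum_adjM_column algebra_simps)
  also have "\<dots> = mod_indicator n (int j - int i)"
    unfolding periodic_pred periodic_succ unfolding N_def by (rule triple_series_identity)
  also have "\<dots> = 1\<^sub>m n $$ (i, j)"
    by (rule mod_indicator_diff_eq_one_mat[OF assms])
  finally show ?thesis .
qed

lemma hilbB_tot_eq: "hilbB_tot n \<xi> = of_nat n * (\<Sum>r<n. triple_series n (int r))"
proof -
  have "hilbB_tot n \<xi> = (\<Sum>i<n. \<Sum>j<n. triple_series n (int j - int i))"
    by (rule fps_ext) (simp add: hilbB_tot_def fps_sum_nth triple_series_def hdim_eq_card_corner_basis
        card_corner_basis)
  also have "\<dots> = (\<Sum>i<n. \<Sum>r<n. triple_series n (int r))"
  proof (rule sum.cong[OF refl])
    fix i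
    show "(\<Sum>j<n. triple_series n (int j - int i)) = (\<Sum>r<n. triple_series n (int r))"
      using sum_triple_series_shift[OF n_pos, of "- int i"] by simp
  qed
  finally show ?thesis by simp
qed

lemma sum_triple_series_identity:
  "(\<Sum>r<n. triple_series n (int r)) * ((1 - fps_X) ^ 2 * (1 - fps_X ^ 2)) = 1"
proof -
  define T where "T = (\<Sum>r<n. triple_series n (int r))"
  have pred: "(\<Sum>r<n. triple_series n (int r - 1)) = T"
    using sum_triple_series_shift[OF n_pos, of "-1"] unfolding T_def by simp
  have succ: "(\<Sum>r<n. triple_series n (int r + 1)) = T"
    using sum_triple_series_shift[OF n_pos, of 1] unfolding T_def by simp
  have "T * ((1 - fps_X) ^ 2 * (1 - fps_X ^ 2)) = (1 - fps_X ^ 2) * ((1 + fps_X ^ 2) * T - fps_X * (T + T))"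
    by (simp add: algebra_simps power2_eq_square)
  also have "\<dots> = (1 - fps_X ^ 2) * ((1 + fps_X ^ 2) * T - fps_X * ((\<Sum>r<n. triple_series n (int r - 1))
           + (\<Sum>r<n. triple_series n (int r + 1))))"
    unfolding pred succ ..
  also have "\<dots> = (\<Sum>r<n. (1 - fps_X ^ 2) * ((1 + fps_X ^ 2) * triple_series n (int r)
           - fps_X * (triple_series n (int r - 1) + triple_series n (int r + 1))))"
    unfolding T_def by (simp add: sum_distrib_left sum_subtractf sum.distrib algebra_simps)
  also have "\<dots> = (\<Sum>r<n. mod_indicator n (int r))"
    by (intro sum.cong refl triple_series_identity)
  also have "\<dots> = (\<Sum>r<n. if r = 0 then 1 else 0)"
    by (intro sum.cong refl) (auto simp: mod_indicator_def)
  also have "\<dots> = 1" using n_pos by simp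
  finally show ?thesis by (simp only: T_def)
qed

end

theorem lemma3p3:
  fixes n :: nat and \<xi> :: "'a::field_char_0"
  assumes alg_closed: "\<forall>p :: 'a poly. degree p > 0 \<longrightarrow> (\<exists>x. poly p x = 0)"
    and n2: "n \<ge> 2"
    and prim: "\<xi> ^ n = 1" "\<forall>m. 0 < m \<and> m < n \<longrightarrow> \<xi> ^ m \<noteq> 1"
  shows "hilbB n \<xi> *
           ((1 - fps_X\<^sup>2) \<cdot>\<^sub>m (1\<^sub>m n - fps_X \<cdot>\<^sub>m map_mat of_nat (adjM n) + fps_X\<^sup>2 \<cdot>\<^sub>m 1\<^sub>m n))
         = 1\<^sub>m n \<and>
         hilbB_tot n \<xi> * ((1 - fps_X)\<^sup>2 * (1 - fps_X\<^sup>2)) = of_nat n"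
proof -
  interpret primitive_root n \<xi>
    using n2 prim by unfold_locales auto
  have "hilbB n \<xi> * hilbert_inverse n = 1\<^sub>m n"
    by (rule eq_matI) (simp_all add: hilbB_mult_hilbert_inverse_entry,
        simp_all add: hilbB_eq_triple_series hilbert_inverse_def)
  moreover have "hilbB_tot n \<xi> * ((1 - fps_X)\<^sup>2 * (1 - fps_X\<^sup>2)) = of_nat n"
    using sum_triple_series_identity by (simp add: hilbB_tot_eq mult.assoc)
  ultimately show ?thesis
    unfolding hilbert_inverse_def by simp
qed

end
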